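(* Consider an instance of the Max-Buying-PL-Limited-$(\alpha,t)$ Problem (defined in the context). There is a non-negative integer $\ell$, whose value is bounded by a function that is linear in the length of the (binary) representation of the instance, such that there is an optimal solution in which the price of every item is at least $d_\ell$.
   Context: Items are $I=\{1,\dots,n\}$, bidders form a finite set $B$, $v=(v_{ib})$ is a non-negative integer valuation matrix and $C_i$ ($i\in I$) are non-negative integer capacities. For a rational $\alpha>1$, a positive integer $t$, and every integer $k\ge 0$, let $d_k=\max\{v_{ib}: i\in I,b\in B\}/\alpha^k$. The Max-Buying-PL-Limited-$(\alpha,t)$ Problem: choose prices $p_1\ge p_2\ge\dots\ge p_n$ with each $p_i\in\{d_0,d_1,\dots\}$, and an allocation, i.e. a set of item–bidder pairs $(i,b)$ (bidder $b$ receives a copy of $i$), such that each item $i$ is given to at most $C_i$ bidders, $p_i\le v_{ib}$ whenever $b$ receives $i$, and for every integer $r\ge 0$ each bidder receives at most one item whose price lies in $\{d_{rt},d_{rt+1},\dots,d_{(r+1)t-1}\}$ (a bidder may thus receive several items). The profit, to be maximized, is the sum over all allocated pairs $(i,b)$ of $p_i$. *)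

theory Defs
  imports Complex_Main
begin

text \<open>Instance: items {1..n}, a finite set B of bidders (natural numbers),
  valuations v i b (nat), capacities C i (nat). Parameters: rational alpha > 1, t > 0.\<close>

definition maxval :: "nat \<Rightarrow> nat set \<Rightarrow> (nat \<Rightarrow> nat \<Rightarrow> nat) \<Rightarrow> nat" where
  "maxval n B v = Max (insert 0 {v i b | i b. i \<in> {1..n} \<and> b \<in> B})"

definition dprice :: "rat \<Rightarrow> nat \<Rightarrow> nat set \<Rightarrow> (nat \<Rightarrow> nat \<Rightarrow> nat) \<Rightarrow> nat \<Rightarrow> real" where
  "dprice \<alpha> n B v k = real (maxval n B v) / (real_of_rat \<alpha>) ^ k"

definition feasible ::
  "rat \<Rightarrow> nat \<Rightarrow> nat \<Rightarrow> nat set \<Rightarrow> (nat \<Rightarrow> nat \<Rightarrow> nat) \<Rightarrow> (nat \<Rightarrow> nat)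
   \<Rightarrow> (nat \<Rightarrow> real) \<Rightarrow> (nat \<times> nat) set \<Rightarrow> bool" where
  "feasible \<alpha> t n B v C p A \<longleftrightarrow>
     (\<forall>i \<in> {1..n}. \<exists>k. p i = dprice \<alpha> n B v k) \<and>
     (\<forall>i j. 1 \<le> i \<and> i \<le> j \<and> j \<le> n \<longrightarrow> p j \<le> p i) \<and>
     A \<subseteq> {1..n} \<times> B \<and>
     (\<forall>i \<in> {1..n}. card {b. (i, b) \<in> A} \<le> C i) \<and>
     (\<forall>(i, b) \<in> A. p i \<le> real (v i b)) \<and>
     (\<forall>r b. card {i. (i, b) \<in> A \<and>
               (\<exists>k. r * t \<le> k \<and> k < (r + 1) * t \<and> p i = dprice \<alpha> n B v k)} \<le> 1)"

definition profit :: "(nat \<Rightarrow> real) \<Rightarrow> (nat \<times> nat) set \<Rightarrow> real" where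
  "profit p A = (\<Sum>(i, b) \<in> A. p i)"

definition optimal ::
  "rat \<Rightarrow> nat \<Rightarrow> nat \<Rightarrow> nat set \<Rightarrow> (nat \<Rightarrow> nat \<Rightarrow> nat) \<Rightarrow> (nat \<Rightarrow> nat)
   \<Rightarrow> (nat \<Rightarrow> real) \<Rightarrow> (nat \<times> nat) set \<Rightarrow> bool" where
  "optimal \<alpha> t n B v C p A \<longleftrightarrow> feasible \<alpha> t n B v C p A \<and>
     (\<forall>p' A'. feasible \<alpha> t n B v C p' A' \<longrightarrow> profit p' A' \<le> profit p A)"

fun bitlen :: "nat \<Rightarrow> nat" where
  "bitlen x = (if x \<le> 1 then 1 else 1 + bitlen (x div 2))"

text \<open>Length of the binary encoding of an instance (up to constant factors).\<close>
definition inst_size :: "nat \<Rightarrow> nat set \<Rightarrow> (nat \<Rightarrow> nat \<Rightarrow> nat) \<Rightarrow> (nat \<Rightarrow> nat) \<Rightarrow> nat" where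
  "inst_size n B v C = n + card B + (\<Sum>i\<in>{1..n}. bitlen (C i))
     + (\<Sum>i\<in>{1..n}. \<Sum>b\<in>B. bitlen (v i b))"

end

theory Submission
  imports Defs "HOL-Library.FuncSet"
begin

text \<open>
  Fix \<open>m\<close> with \<open>\<alpha>^m > 2\<close> and put \<open>K = m \<cdot> bitlen(max v)\<close>; then every price \<open>d\<^sub>k\<close> with
  \<open>k \<ge> K t\<close> is at most 1, hence at most every valuation of a bidder who pays a positive price.
  Group the price indices into blocks of \<open>t\<close> consecutive indices. In a feasible solution at
  most \<open>n\<close> blocks at or above \<open>K\<close> are occupied; moving them down, in order and keeping the
  offsets inside the blocks, so that they occupy the blocks \<open>K, K + 1, \<dots>\<close>, only raises
  prices and preserves their order, the one-item-per-block condition of every bidder and the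
  valuation constraints. So every solution is dominated by one whose price indices are below
  \<open>(K + n) t\<close>, which is linear in the instance size, and among those only finitely many
  profits occur, so one of them is optimal.
\<close>

section \<open>The price ladder\<close>

lemma dprice_antimono:
  assumes "\<alpha> > 1" "k \<le> k'"
  shows "dprice \<alpha> n B v k' \<le> dprice \<alpha> n B v k"
  using assms unfolding dprice_def by (simp add: divide_left_mono power_increasing)

lemma dprice_le_dprice_iff:
  assumes "\<alpha> > 1" "maxval n B v > 0"
  shows "dprice \<alpha> n B v k \<le> dprice \<alpha> n B v k' \<longleftrightarrow> k' \<le> k"
proof -
  have "dprice \<alpha> n B v k \<le> dprice \<alpha> n B v k' \<longleftrightarrow>
        real_of_rat \<alpha> ^ k' \<le> real_of_rat \<alpha> ^ k"
    using assms unfolding dprice_def by (simp add: divide_le_cancel frac_le_eq field_simps)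
  also have "\<dots> \<longleftrightarrow> k' \<le> k" using assms(1) by simp
  finally show ?thesis .
qed

lemma dprice_inject:
  assumes "\<alpha> > 1" "maxval n B v > 0"
  shows "dprice \<alpha> n B v k = dprice \<alpha> n B v k' \<longleftrightarrow> k = k'"
  using dprice_le_dprice_iff[OF assms] by (metis order.antisym order.refl)

lemma dprice_pos:
  assumes "\<alpha> > 1" "maxval n B v > 0"
  shows "dprice \<alpha> n B v k > 0"
  using assms unfolding dprice_def by simp

lemma dprice_maxval_0: "maxval n B v = 0 \<Longrightarrow> dprice \<alpha> n B v k = 0"
  unfolding dprice_def by simp

(* The defining equation of bitlen would make the simplifier loop on non-numeral arguments. *)
declare bitlen.simps [simp del]

lemma less_2_power_bitlen: "x < 2 ^ bitlen x"
proof (induction x rule: bitlen.induct)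
  case (1 x)
  show ?case
  proof (cases "x \<le> 1")
    case False
    then have "x div 2 < 2 ^ bitlen (x div 2)" using 1 by simp
    then show ?thesis using False by (simp add: bitlen.simps)
  qed (simp add: bitlen.simps)
qed

lemma dprice_bitlen_le_1:
  assumes "\<alpha> > 1" "2 < real_of_rat \<alpha> ^ m" "t > 0"
  shows "dprice \<alpha> n B v (m * bitlen (maxval n B v) * t) \<le> 1"
proof -
  let ?M = "maxval n B v"
  have "real ?M < 2 ^ bitlen ?M"
    by (metis less_2_power_bitlen of_nat_less_iff of_nat_numeral of_nat_power)
  also have "\<dots> \<le> (real_of_rat \<alpha> ^ m) ^ bitlen ?M"
    using assms(2) by (intro power_mono) simp_all
  also have "\<dots> \<le> real_of_rat \<alpha> ^ (m * bitlen ?M * t)"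
    using assms(1,3) by (simp add: power_mult[symmetric] power_increasing)
  finally show ?thesis using assms(1) unfolding dprice_def by simp
qed

lemma maxval_cases:
  assumes "finite B"
  shows "maxval n B v = 0 \<or> (\<exists>i\<in>{1..n}. \<exists>b\<in>B. maxval n B v = v i b)"
proof -
  have "{v i b | i b. i \<in> {1..n} \<and> b \<in> B} = (\<lambda>(i, b). v i b) ` ({1..n} \<times> B)" by force
  then have "finite (insert 0 {v i b | i b. i \<in> {1..n} \<and> b \<in> B})"
    using assms by simp
  then have "maxval n B v \<in> insert 0 {v i b | i b. i \<in> {1..n} \<and> b \<in> B}"
    unfolding maxval_def by (rule Max_in) simp
  then show ?thesis by auto
qed

lemma bitlen_maxval_le_inst_size:
  assumes "finite B"
  shows "bitlen (maxval n B v) \<le> inst_size n B v C + 1"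
  using maxval_cases[OF assms, of n v]
proof
  assume "\<exists>i\<in>{1..n}. \<exists>b\<in>B. maxval n B v = v i b"
  then obtain i b where ib: "i \<in> {1..n}" "b \<in> B" "maxval n B v = v i b" by blast
  have "bitlen (v i b) \<le> (\<Sum>b'\<in>B. bitlen (v i b'))"
    using assms ib by (intro member_le_sum) auto
  also have "\<dots> \<le> (\<Sum>i'\<in>{1..n}. \<Sum>b'\<in>B. bitlen (v i' b'))"
    using ib by (intro member_le_sum) auto
  finally show ?thesis unfolding inst_size_def ib(3) by linarith
qed (simp add: bitlen.simps)

section \<open>Compressing the occupied blocks of price indices\<close>

definition compress_block :: "nat set \<Rightarrow> nat \<Rightarrow> nat \<Rightarrow> nat" where
  "compress_block R K r = (if r < K then r else K + card {u \<in> R. K \<le> u \<and> u < r})"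

lemma compress_block_le: "compress_block R K r \<le> r"
proof -
  have "card {u \<in> R. K \<le> u \<and> u < r} \<le> card {K..<r}" by (rule card_mono) auto
  then show ?thesis unfolding compress_block_def by auto
qed

lemma compress_block_ge: "K \<le> r \<Longrightarrow> K \<le> compress_block R K r"
  unfolding compress_block_def by simp

lemma compress_block_less:
  assumes "finite R" "r \<in> R"
  shows "compress_block R K r < K + card R"
proof -
  have "card {u \<in> R. K \<le> u \<and> u < r} < card R"
    using assms by (intro psubset_card_mono) auto
  then show ?thesis unfolding compress_block_def using assms by auto
qed

lemma strict_mono_on_compress_block:
  assumes "finite R"
  shows "strict_mono_on R (compress_block R K)"
proof (rule strict_mono_onI)
  fix r s assume "r \<in> R" "s \<in> R" "r < s"
  then have "card {u \<in> R. K \<le> u \<and> u < r} < card {u \<in> R. K \<le> u \<and> u < s}" if "K \<le> r"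
    using assms that by (intro psubset_card_mono) auto
  then show "compress_block R K r < compress_block R K s"
    using \<open>r < s\<close> unfolding compress_block_def by auto
qed

definition compress_index :: "nat set \<Rightarrow> nat \<Rightarrow> nat \<Rightarrow> nat \<Rightarrow> nat" where
  "compress_index R K t x = compress_block R K (x div t) * t + x mod t"

context
  fixes t :: nat
  assumes t_pos: "t > 0"
begin

lemma compress_index_div: "compress_index R K t x div t = compress_block R K (x div t)"
  using t_pos unfolding compress_index_def by simp

lemma compress_index_le: "compress_index R K t x \<le> x"
proof -
  have "compress_block R K (x div t) * t \<le> x div t * t"
    by (intro mult_le_mono1 compress_block_le)
  then show ?thesis using div_mult_mod_eq[of x t] unfolding compress_index_def by linarith
qed

lemma compress_index_below:
  assumes "x < K * t"
  shows "compress_index R K t x = x"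
proof -
  have "x div t < K" using assms t_pos by (simp add: less_mult_imp_div_less)
  then show ?thesis unfolding compress_index_def compress_block_def by simp
qed

lemma compress_index_ge:
  assumes "K * t \<le> x"
  shows "K * t \<le> compress_index R K t x"
proof -
  have "K \<le> x div t" using assms t_pos by (simp add: less_eq_div_iff_mult_less_eq)
  then have "K * t \<le> compress_block R K (x div t) * t"
    by (intro mult_le_mono1 compress_block_ge)
  then show ?thesis unfolding compress_index_def by linarith
qed

lemma compress_index_less:
  assumes "finite R" "x div t \<in> R"
  shows "compress_index R K t x < (K + card R) * t"
proof -
  have "Suc (compress_block R K (x div t)) \<le> K + card R"
    using compress_block_less[OF assms, of K] by simp
  from mult_le_mono1[OF this, of t]
  have "compress_block R K (x div t) * t + t \<le> (K + card R) * t" by simp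
  moreover have "x mod t < t" using t_pos by simp
  ultimately show ?thesis unfolding compress_index_def by linarith
qed

lemma compress_index_mono:
  assumes "finite R" "x div t \<in> R" "y div t \<in> R" "x \<le> y"
  shows "compress_index R K t x \<le> compress_index R K t y"
proof (cases "x div t = y div t")
  case True
  then have "x mod t \<le> y mod t"
    using assms(4) by (metis add_le_cancel_left div_mult_mod_eq)
  then show ?thesis using True unfolding compress_index_def by simp
next
  case False
  then have "x div t < y div t" using assms(4) div_le_mono le_neq_implies_less by blast
  then have "Suc (compress_block R K (x div t)) \<le> compress_block R K (y div t)"
    using strict_mono_onD[OF strict_mono_on_compress_block[OF assms(1), of K] assms(2,3)] by simp
  from mult_le_mono1[OF this, of t]
  have "compress_block R K (x div t) * t + t \<le> compress_block R K (y div t) * t" by simp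
  moreover have "x mod t < t" using t_pos by simp
  ultimately show ?thesis unfolding compress_index_def by linarith
qed

end

section \<open>Raising the prices of a feasible solution\<close>

lemma feasible_price_indices:
  assumes "feasible \<alpha> t n B v C p A"
  obtains k where "\<forall>i\<in>{1..n}. p i = dprice \<alpha> n B v (k i)"
proof -
  have "\<forall>i\<in>{1..n}. \<exists>k. p i = dprice \<alpha> n B v k" using assms unfolding feasible_def by blast
  then show thesis using that by metis
qed

lemma one_item_per_block_iff:
  assumes "\<alpha> > 1" "t > 0" "maxval n B v > 0" "A \<subseteq> {1..n} \<times> B"
    and k: "\<forall>i\<in>{1..n}. p i = dprice \<alpha> n B v (k i)"
  shows "(\<forall>r b. card {i. (i, b) \<in> A \<and>
            (\<exists>k'. r * t \<le> k' \<and> k' < (r + 1) * t \<and> p i = dprice \<alpha> n B v k')} \<le> 1)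
    \<longleftrightarrow> (\<forall>i j b. (i, b) \<in> A \<longrightarrow> (j, b) \<in> A \<longrightarrow> k i div t = k j div t \<longrightarrow> i = j)"
proof -
  have block: "{i. (i, b) \<in> A \<and> (\<exists>k'. r * t \<le> k' \<and> k' < (r + 1) * t \<and> p i = dprice \<alpha> n B v k')}
      = {i. (i, b) \<in> A \<and> k i div t = r}" for r b
  proof -
    have "r * t \<le> x \<and> x < (r + 1) * t \<longleftrightarrow> x div t = r" for x
      using assms(2) by (auto intro: div_nat_eqI dividend_less_times_div simp: mult.commute)
    then have "(\<exists>k'. r * t \<le> k' \<and> k' < (r + 1) * t \<and> p i = dprice \<alpha> n B v k') \<longleftrightarrow> k i div t = r"
      if "i \<in> {1..n}" for i
      using k that dprice_inject[OF assms(1,3)] by auto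
    then show ?thesis using assms(4) by blast
  qed
  have "finite {i. (i, b) \<in> A \<and> k i div t = r}" for r b
    by (rule finite_subset[of _ "{1..n}"]) (use assms(4) in auto)
  then show ?thesis unfolding block by (auto simp: card_le_Suc0_iff_eq)
qed

lemma feasible_reindex:
  assumes \<alpha>: "\<alpha> > 1" and t: "t > 0" and M: "maxval n B v > 0"
    and F: "feasible \<alpha> t n B v C p A"
    and k: "\<forall>i\<in>{1..n}. p i = dprice \<alpha> n B v (k i)"
    and mono: "\<And>i j. i \<in> {1..n} \<Longrightarrow> j \<in> {1..n} \<Longrightarrow> k i \<le> k j \<Longrightarrow> k' i \<le> k' j"
    and blocks: "\<And>i j. i \<in> {1..n} \<Longrightarrow> j \<in> {1..n} \<Longrightarrow>
        k' i div t = k' j div t \<Longrightarrow> k i div t = k j div t"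
    and small: "\<And>i. i \<in> {1..n} \<Longrightarrow> k' i \<noteq> k i \<Longrightarrow> dprice \<alpha> n B v (k' i) \<le> 1"
  shows "feasible \<alpha> t n B v C (\<lambda>i. dprice \<alpha> n B v (k' i)) A"
proof -
  let ?d = "dprice \<alpha> n B v"
  have p_mono: "\<forall>i j. 1 \<le> i \<and> i \<le> j \<and> j \<le> n \<longrightarrow> p j \<le> p i"
    and A: "A \<subseteq> {1..n} \<times> B"
    and cap: "\<forall>i\<in>{1..n}. card {b. (i, b) \<in> A} \<le> C i"
    and val: "\<forall>(i, b)\<in>A. p i \<le> real (v i b)"
    and one_per_block: "\<forall>r b. card {i. (i, b) \<in> A \<and>
          (\<exists>k. r * t \<le> k \<and> k < (r + 1) * t \<and> p i = ?d k)} \<le> 1"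
    using F unfolding feasible_def by blast+
  have k_blocks: "\<forall>i j b. (i, b) \<in> A \<longrightarrow> (j, b) \<in> A \<longrightarrow> k i div t = k j div t \<longrightarrow> i = j"
    using one_item_per_block_iff[OF \<alpha> t M A k] one_per_block by blast
  show ?thesis
    unfolding feasible_def
  proof (intro conjI)
    show "\<forall>i\<in>{1..n}. \<exists>k. ?d (k' i) = ?d k" by blast
    show "\<forall>i j. 1 \<le> i \<and> i \<le> j \<and> j \<le> n \<longrightarrow> ?d (k' j) \<le> ?d (k' i)"
    proof (intro allI impI)
      fix i j assume ij: "1 \<le> i \<and> i \<le> j \<and> j \<le> n"
      then have "p j \<le> p i" using p_mono by blast
      then have "k i \<le> k j" using ij k dprice_le_dprice_iff[OF \<alpha> M] by simp
      then have "k' i \<le> k' j" using ij by (intro mono) auto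
      then show "?d (k' j) \<le> ?d (k' i)" by (rule dprice_antimono[OF \<alpha>])
    qed
    show "A \<subseteq> {1..n} \<times> B" "\<forall>i\<in>{1..n}. card {b. (i, b) \<in> A} \<le> C i"
      by (fact A cap)+
    show "\<forall>(i, b)\<in>A. ?d (k' i) \<le> real (v i b)"
    proof clarify
      fix i b assume ib: "(i, b) \<in> A"
      then have i: "i \<in> {1..n}" using A by auto
      show "?d (k' i) \<le> real (v i b)"
      proof (cases "k' i = k i")
        case True
        then show ?thesis using ib val k i by auto
      next
        case False
        have "0 < real (v i b)"
          using ib val dprice_pos[OF \<alpha> M, of "k i"] k i by fastforce
        then show ?thesis using small[OF i False] by simp
      qed
    qed
    have "\<forall>i j b. (i, b) \<in> A \<longrightarrow> (j, b) \<in> A \<longrightarrow> k' i div t = k' j div t \<longrightarrow> i = j"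
      using k_blocks blocks A by blast
    then show "\<forall>r b. card {i. (i, b) \<in> A \<and>
        (\<exists>k. r * t \<le> k \<and> k < (r + 1) * t \<and> ?d (k' i) = ?d k)} \<le> 1"
      using one_item_per_block_iff[OF \<alpha> t M A, of _ k'] by simp
  qed
qed

lemma feasible_compress_prices:
  assumes \<alpha>: "\<alpha> > 1" and t: "t > 0" and M: "maxval n B v > 0"
    and small: "dprice \<alpha> n B v (K * t) \<le> 1"
    and F: "feasible \<alpha> t n B v C p A"
  shows "\<exists>p'. feasible \<alpha> t n B v C p' A \<and> profit p A \<le> profit p' A \<and>
           (\<forall>i\<in>{1..n}. dprice \<alpha> n B v ((K + n) * t) \<le> p' i)"
proof -
  let ?d = "dprice \<alpha> n B v"
  obtain k where k: "\<forall>i\<in>{1..n}. p i = ?d (k i)"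
    using F by (rule feasible_price_indices)
  define R where "R = (\<lambda>i. k i div t) ` {1..n}"
  define k' where "k' i = compress_index R K t (k i)" for i
  have R: "finite R" "card R \<le> n"
    unfolding R_def using card_image_le[of "{1..n}" "\<lambda>i. k i div t"] by simp_all
  have inR: "k i div t \<in> R" if "i \<in> {1..n}" for i
    unfolding R_def using that by blast
  have "feasible \<alpha> t n B v C (\<lambda>i. ?d (k' i)) A"
  proof (rule feasible_reindex[OF \<alpha> t M F k])
    fix i j assume ij: "i \<in> {1..n}" "j \<in> {1..n}"
    show "k' i \<le> k' j" if "k i \<le> k j"
      unfolding k'_def using that by (intro compress_index_mono[OF t R(1) inR[OF ij(1)] inR[OF ij(2)]])
    show "k i div t = k j div t" if "k' i div t = k' j div t"
    proof (rule inj_onD[OF strict_mono_on_imp_inj_on[OF strict_mono_on_compress_block[OF R(1)]]])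
      show "compress_block R K (k i div t) = compress_block R K (k j div t)"
        using that unfolding k'_def compress_index_div[OF t] .
    qed (fact inR[OF ij(1)] inR[OF ij(2)])+
  next
    fix i assume moved: "k' i \<noteq> k i"
    have "\<not> k i < K * t"
      using moved compress_index_below[OF t, of "k i" K R] unfolding k'_def by blast
    then have "K * t \<le> k' i" unfolding k'_def by (intro compress_index_ge[OF t]) simp
    then have "?d (k' i) \<le> ?d (K * t)" by (rule dprice_antimono[OF \<alpha>])
    then show "?d (k' i) \<le> 1" using small by linarith
  qed
  moreover have "profit p A \<le> profit (\<lambda>i. ?d (k' i)) A"
  proof -
    have "A \<subseteq> {1..n} \<times> B" using F unfolding feasible_def by blast
    moreover have "p i \<le> ?d (k' i)" if "i \<in> {1..n}" for i
      unfolding k'_def using k that by (simp add: dprice_antimono[OF \<alpha> compress_index_le[OF t]])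
    ultimately show ?thesis unfolding profit_def by (intro sum_mono) auto
  qed
  moreover have "?d ((K + n) * t) \<le> ?d (k' i)" if "i \<in> {1..n}" for i
  proof -
    have "k' i < (K + card R) * t"
      unfolding k'_def by (rule compress_index_less[OF t R(1) inR[OF that]])
    also have "\<dots> \<le> (K + n) * t" using R(2) by simp
    finally show ?thesis by (intro dprice_antimono[OF \<alpha>]) simp
  qed
  ultimately show ?thesis by blast
qed

section \<open>Existence of an optimum with bounded price indices\<close>

lemma feasible_price_in_prefix:
  assumes "\<alpha> > 1" "feasible \<alpha> t n B v C p A" "i \<in> {1..n}" "dprice \<alpha> n B v l \<le> p i"
  shows "p i \<in> dprice \<alpha> n B v ` {..l}"
proof -
  obtain k where k: "p i = dprice \<alpha> n B v k" using assms(2,3) unfolding feasible_def by blast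
  show ?thesis
  proof (cases "maxval n B v = 0")
    case True
    then show ?thesis using k dprice_maxval_0 by (metis atMost_iff image_eqI le0)
  next
    case False
    then have "k \<le> l" using dprice_le_dprice_iff[OF assms(1)] assms(4) k by simp
    then show ?thesis using k by blast
  qed
qed

lemma finite_profits_above:
  assumes "finite B" "\<alpha> > 1"
  shows "finite ((\<lambda>(p, A). profit p A) `
           {(p, A). feasible \<alpha> t n B v C p A \<and> (\<forall>i\<in>{1..n}. dprice \<alpha> n B v l \<le> p i)})"
    (is "finite (_ ` ?F)")
proof (rule finite_subset)
  let ?X = "{1..n} \<times> B" and ?D = "dprice \<alpha> n B v ` {..l}"
  show "(\<lambda>(p, A). profit p A) ` ?F
      \<subseteq> (\<lambda>(A, q). \<Sum>(i, b)\<in>A. q i) ` (Pow ?X \<times> PiE {1..n} (\<lambda>_. ?D))"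
  proof clarify
    fix p A assume F: "feasible \<alpha> t n B v C p A" and above: "\<forall>i\<in>{1..n}. dprice \<alpha> n B v l \<le> p i"
    then have AX: "A \<subseteq> ?X" unfolding feasible_def by blast
    have "profit p A = (\<Sum>(i, b)\<in>A. restrict p {1..n} i)"
      unfolding profit_def using AX by (intro sum.cong) auto
    moreover have "restrict p {1..n} \<in> PiE {1..n} (\<lambda>_. ?D)"
      using feasible_price_in_prefix[OF assms(2) F] above by auto
    ultimately show "profit p A \<in> (\<lambda>(A, q). \<Sum>(i, b)\<in>A. q i) ` (Pow ?X \<times> PiE {1..n} (\<lambda>_. ?D))"
      using AX by (intro image_eqI[of _ _ "(A, restrict p {1..n})"]) auto
  qed
  show "finite ((\<lambda>(A, q). \<Sum>(i, b)\<in>A. q i) ` (Pow ?X \<times> PiE {1..n} (\<lambda>_. ?D)))"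
    using assms(1) by (intro finite_imageI finite_cartesian_product finite_PiE) auto
qed

lemma optimal_exists_above:
  assumes "finite B" "\<alpha> > 1"
    and dominated: "\<And>p A. feasible \<alpha> t n B v C p A \<Longrightarrow> \<exists>p' A'. feasible \<alpha> t n B v C p' A' \<and>
        profit p A \<le> profit p' A' \<and> (\<forall>i\<in>{1..n}. dprice \<alpha> n B v l \<le> p' i)"
  shows "\<exists>p A. optimal \<alpha> t n B v C p A \<and> (\<forall>i\<in>{1..n}. dprice \<alpha> n B v l \<le> p i)"
proof -
  define F where "F = {(p, A). feasible \<alpha> t n B v C p A \<and> (\<forall>i\<in>{1..n}. dprice \<alpha> n B v l \<le> p i)}"
  define V where "V = (\<lambda>(p, A). profit p A) ` F"
  have "finite V" unfolding V_def F_def using assms(1,2) by (rule finite_profits_above)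
  moreover have "((\<lambda>_. dprice \<alpha> n B v 0), {}) \<in> F"
    unfolding F_def feasible_def using dprice_antimono[OF assms(2)] by auto
  then have "V \<noteq> {}" unfolding V_def by blast
  ultimately have "Max V \<in> V" by (rule Max_in)
  then obtain p A where pA: "(p, A) \<in> F" "profit p A = Max V" unfolding V_def by auto
  have "profit p' A' \<le> profit p A" if F': "feasible \<alpha> t n B v C p' A'" for p' A'
  proof -
    obtain p'' A'' where "(p'', A'') \<in> F" "profit p' A' \<le> profit p'' A''"
      using dominated[OF F'] unfolding F_def by blast
    moreover from this(1) have "profit p'' A'' \<in> V" unfolding V_def by force
    then have "profit p'' A'' \<le> Max V" using \<open>finite V\<close> by simp
    ultimately show ?thesis using pA(2) by simp
  qed
  then show ?thesis using pA(1) unfolding F_def optimal_def by blast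
qed

lemma threshold_index_le_inst_size:
  assumes "finite B"
  shows "(m * bitlen (maxval n B v) + n) * t \<le> (m + 1) * t * (inst_size n B v C + 1)"
proof -
  let ?S = "inst_size n B v C + 1"
  have "m * bitlen (maxval n B v) \<le> m * ?S"
    by (rule mult_le_mono2[OF bitlen_maxval_le_inst_size[OF assms]])
  moreover have "n \<le> ?S" unfolding inst_size_def by simp
  moreover have "(m + 1) * ?S = m * ?S + ?S" by simp
  ultimately have "m * bitlen (maxval n B v) + n \<le> (m + 1) * ?S" by linarith
  from mult_le_mono1[OF this, of t] show ?thesis by (simp only: ac_simps)
qed

lemma optimal_exists_above_threshold:
  assumes "finite B" "\<alpha> > 1" "t > 0" "2 < real_of_rat \<alpha> ^ m"
  shows "\<exists>p A. optimal \<alpha> t n B v C p A \<and>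
           (\<forall>i\<in>{1..n}. dprice \<alpha> n B v ((m * bitlen (maxval n B v) + n) * t) \<le> p i)"
proof (rule optimal_exists_above[OF assms(1,2)])
  fix p A assume F: "feasible \<alpha> t n B v C p A"
  show "\<exists>p' A'. feasible \<alpha> t n B v C p' A' \<and> profit p A \<le> profit p' A' \<and>
      (\<forall>i\<in>{1..n}. dprice \<alpha> n B v ((m * bitlen (maxval n B v) + n) * t) \<le> p' i)"
  proof (cases "maxval n B v = 0")
    case True
    obtain k where "\<forall>i\<in>{1..n}. p i = dprice \<alpha> n B v (k i)"
      using F by (rule feasible_price_indices)
    then have "\<forall>i\<in>{1..n}. dprice \<alpha> n B v ((m * bitlen (maxval n B v) + n) * t) \<le> p i"
      using dprice_maxval_0[OF True] by simp
    then show ?thesis using F by blast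
  next
    case False
    then show ?thesis
      using feasible_compress_prices[OF assms(2,3) False[unfolded neq0_conv]
          dprice_bitlen_le_1[OF assms(2,4,3)] F] by blast
  qed
qed

theorem lemma13:
  fixes \<alpha> :: rat and t :: nat
  assumes "\<alpha> > 1" and "t > 0"
  shows "\<exists>c::nat. \<forall>n (B::nat set) v C. finite B \<longrightarrow>
           (\<exists>l. l \<le> c * (inst_size n B v C + 1) \<and>
              (\<exists>p A. optimal \<alpha> t n B v C p A \<and>
                     (\<forall>i \<in> {1..n}. p i \<ge> dprice \<alpha> n B v l)))"
proof -
  obtain m where m: "2 < real_of_rat \<alpha> ^ m"
    using real_arch_pow[of "real_of_rat \<alpha>" 2] assms(1) by auto
  show ?thesis
  proof (rule exI[of _ "(m + 1) * t"], intro allI impI)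
    fix n B v C assume B: "finite (B :: nat set)"
    show "\<exists>l. l \<le> (m + 1) * t * (inst_size n B v C + 1) \<and>
        (\<exists>p A. optimal \<alpha> t n B v C p A \<and> (\<forall>i\<in>{1..n}. dprice \<alpha> n B v l \<le> p i))"
      using threshold_index_le_inst_size[OF B] optimal_exists_above_threshold[OF B assms m]
      by blast
  qed
qed

end
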